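(* Let $R=k[x_1,\ldots,x_n]$ and let $(h_0,h_1,\ldots,h_s)$ be the $h$-vector of a graded Artinian level algebra $A=R/I$ with socle degree $s$. Suppose that $h_{d-1}>h_d$ for some $d\geq r_1(A)$. Then (a) $h_{d-1}>h_d>\cdots>h_{s-1}>h_s>0$, and (b) $h_{t-1}-h_t\leq (n-1)(h_t-h_{t+1})$ for all $d\le t\le s$ (where $h_{s+1}=0$).
   Context: $k$ is an infinite field of characteristic $0$. $h_i=\dim_k A_i$, and $s$ is the largest degree with $A_s\ne0$ (the socle degree). The socle of $A$ is $\{a\in A: a\mathfrak m=0\}$ with $\mathfrak m$ the maximal homogeneous ideal; $A$ is level if its socle is concentrated in a single degree. The reduction number $r_1(A)=\min\{\ell:(R/(I+(L)))_{\ell+1}=0\}$ for a general linear form $L$ (equivalently $\min\{\ell: x_{n-1}^{\ell+1}\in\mathrm{Gin}(I)\}$, $\mathrm{Gin}$ taken with respect to degree reverse lexicographic order). *)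

theory Defs
  imports Complex_Main "HOL-Library.Poly_Mapping"
begin

text \<open>Polynomials over a field 'k in the variables x_0, x_1, ... :
  monomials are exponent vectors (finitely supported maps nat to nat), polynomials are finitely
  supported coefficient functions on monomials.\<close>

type_synonym 'k mpoly = "(nat \<Rightarrow>\<^sub>0 nat) \<Rightarrow>\<^sub>0 'k"

definition mdeg :: "(nat \<Rightarrow>\<^sub>0 nat) \<Rightarrow> nat" where
  "mdeg m = (\<Sum>i\<in>Poly_Mapping.keys m. Poly_Mapping.lookup m i)"

definition polyring :: "nat \<Rightarrow> 'k::field mpoly set" where
  "polyring n = {p. \<forall>m\<in>Poly_Mapping.keys p. Poly_Mapping.keys m \<subseteq> {..<n}}"

definition hompart :: "nat \<Rightarrow> nat \<Rightarrow> 'k::field mpoly set" where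
  "hompart n j = {p \<in> polyring n. \<forall>m\<in>Poly_Mapping.keys p. mdeg m = j}"

definition homcomp :: "nat \<Rightarrow> 'k::field mpoly \<Rightarrow> 'k mpoly" where
  "homcomp j p = (\<Sum>m\<in>{m\<in>Poly_Mapping.keys p. mdeg m = j}. Poly_Mapping.single m (Poly_Mapping.lookup p m))"

definition var :: "nat \<Rightarrow> 'k::field mpoly" where
  "var i = Poly_Mapping.single (Poly_Mapping.single i 1) 1"

definition scal :: "'k::field \<Rightarrow> 'k mpoly \<Rightarrow> 'k mpoly" where
  "scal c p = Poly_Mapping.map (\<lambda>a. c * a) p"

definition kdim :: "'k::field mpoly set \<Rightarrow> nat" where
  "kdim V = vector_space.dim scal V"

definition is_ideal :: "nat \<Rightarrow> 'k::field mpoly set \<Rightarrow> bool" where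
  "is_ideal n I \<longleftrightarrow> I \<subseteq> polyring n \<and> 0 \<in> I \<and>
     (\<forall>p\<in>I. \<forall>q\<in>I. p + q \<in> I) \<and> (\<forall>r\<in>polyring n. \<forall>p\<in>I. r * p \<in> I)"

definition homogeneous_ideal :: "nat \<Rightarrow> 'k::field mpoly set \<Rightarrow> bool" where
  "homogeneous_ideal n I \<longleftrightarrow> is_ideal n I \<and> (\<forall>p\<in>I. \<forall>j. homcomp j p \<in> I)"

text \<open>A = R/I is a graded Artinian k-algebra (nonzero): I is a proper homogeneous
  ideal and A_N = 0 for some N.\<close>
definition graded_artinian :: "nat \<Rightarrow> 'k::field mpoly set \<Rightarrow> bool" where
  "graded_artinian n I \<longleftrightarrow> homogeneous_ideal n I \<and> 1 \<notin> I \<and>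
     (\<exists>N. hompart n N \<subseteq> I)"

text \<open>h_j = dim_k A_j = dim_k (R_j / I_j) = dim_k R_j - dim_k (I \<inter> R_j).\<close>
definition hvec :: "nat \<Rightarrow> 'k::field mpoly set \<Rightarrow> nat \<Rightarrow> nat" where
  "hvec n I j = kdim (hompart n j :: 'k mpoly set) - kdim (I \<inter> hompart n j)"

text \<open>Socle of A (as preimages in R): a with a * m = 0, i.e. x_i a \<in> I for all i.\<close>
definition socle_pre :: "nat \<Rightarrow> 'k::field mpoly set \<Rightarrow> 'k mpoly set" where
  "socle_pre n I = {p \<in> polyring n. \<forall>i<n. var i * p \<in> I}"

text \<open>Level: the socle is concentrated in a single degree j, i.e. every socle
  element lies in A_j (its class agrees with that of its degree-j component).\<close>
definition level :: "nat \<Rightarrow> 'k::field mpoly set \<Rightarrow> bool" where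
  "level n I \<longleftrightarrow> (\<exists>j. \<forall>p\<in>socle_pre n I. p - homcomp j p \<in> I)"

definition linform :: "nat \<Rightarrow> (nat \<Rightarrow> 'k::field) \<Rightarrow> 'k mpoly" where
  "linform n c = (\<Sum>i<n. Poly_Mapping.single (Poly_Mapping.single i 1) (c i))"

definition ideal_plus_lin :: "nat \<Rightarrow> 'k::field mpoly set \<Rightarrow> 'k mpoly \<Rightarrow> 'k mpoly set" where
  "ideal_plus_lin n I L = {a + r * L | a r. a \<in> I \<and> r \<in> polyring n}"

definition red_num_wrt :: "nat \<Rightarrow> 'k::field mpoly set \<Rightarrow> 'k mpoly \<Rightarrow> nat" where
  "red_num_wrt n I L = (LEAST l. hompart n (l + 1) \<subseteq> ideal_plus_lin n I L)"

definition meval :: "'k::field mpoly \<Rightarrow> (nat \<Rightarrow> 'k) \<Rightarrow> 'k" where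
  "meval f c = (\<Sum>m\<in>Poly_Mapping.keys f. Poly_Mapping.lookup f m * (\<Prod>i\<in>Poly_Mapping.keys m. c i ^ Poly_Mapping.lookup m i))"

text \<open>r_1(A): the value of red_num_wrt for a general linear form L, i.e. the
  value attained on a nonempty Zariski open subset {c. f(c) \<noteq> 0}, f \<noteq> 0,
  of the space k^n of coefficient vectors.\<close>
definition r1 :: "nat \<Rightarrow> 'k::field mpoly set \<Rightarrow> nat" where
  "r1 n I = (THE r. \<exists>f::'k mpoly. f \<in> polyring n \<and> f \<noteq> 0 \<and>
       (\<forall>c. meval f c \<noteq> 0 \<longrightarrow> red_num_wrt n I (linform n c) = r))"

end

theory Submission
  imports Defs "Jordan_Normal_Form.Determinant" "HOL-Computational_Algebra.Polynomial"
begin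

(* For a linear form L, rank-nullity for multiplication by L from R_j to R_(j+1) gives
     h_j - h_(j+1) = dim (0 :_A L)_j - dim (A/LA)_(j+1),
   so h_j - h_(j+1) <= dim (0 :_A L)_j, with equality once j >= r_1 when L is general.
   If A is level of socle degree s and j < s, an element of A_j killed by L and by all
   variables but x_i is also killed by x_i, hence lies in the socle and is 0.  Imposing
   the n - 1 other variables one at a time, each costing at most dim (0 :_A L)_(j+1),
   therefore yields
     dim (0 :_A L)_j <= (n - 1) dim (0 :_A L)_(j+1).
   From h_(d-1) > h_d these annihilator dimensions stay positive up to degree s, which
   gives (a), and (b) is the displayed inequality.  That r_1 is attained by a linear form
   with nonzero coefficients uses that, over an infinite field, the forms of minimal
   reduction number contain a nonempty Zariski open set, cut out by a determinant. *)

section \<open>Dimension formulas\<close>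

context vector_space
begin

lemma dim_le_dim_of_subset_span:
  assumes "S \<subseteq> T" "T \<subseteq> span F" "finite F"
  shows "dim S \<le> dim T"
proof -
  obtain B where B: "B \<subseteq> S" "independent B" "S \<subseteq> span B" "card B = dim S"
    using basis_exists by blast
  obtain C where C: "C \<subseteq> T" "independent C" "T \<subseteq> span C" "card C = dim T"
    using basis_exists by blast
  have "finite C"
    using independent_span_bound[OF assms(3) C(2)] C(1) assms(2) by auto
  moreover have "B \<subseteq> span C"
    using B(1) assms(1) C(3) by auto
  ultimately show ?thesis
    using independent_span_bound[OF _ B(2)] B(4) C(4) by metis
qed

lemma subspace_eq_of_dim_eq:
  assumes "S \<subseteq> T" "T \<subseteq> span F" "finite F" "dim S = dim T" "subspace S"
  shows "S = T"
proof -
  obtain B where B: "B \<subseteq> S" "independent B" "S \<subseteq> span B" "card B = dim S"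
    using basis_exists by blast
  obtain C where C: "B \<subseteq> C" "C \<subseteq> T" "independent C" "T \<subseteq> span C"
    using maximal_independent_subset_extend[of B T] B assms(1) by blast
  have "finite C"
    using independent_span_bound[OF assms(3) C(3)] C(2) assms(2) by auto
  moreover have "card C = card B"
    using basis_card_eq_dim[OF C(2) C(4) C(3)] B(4) assms(4) by simp
  ultimately have "C = B"
    using C(1) by (metis card_subset_eq)
  then have "T \<subseteq> span B"
    using C(4) by simp
  with span_minimal[OF B(1) assms(5)] assms(1) show ?thesis
    by blast
qed

lemma span_Int_span_Diff:
  assumes "independent B" "finite B" "B0 \<subseteq> B"
  shows "span B0 \<inter> span (B - B0) = {0}"
proof -
  have "x = 0" if x: "x \<in> span B0" "x \<in> span (B - B0)" for x
  proof -
    have "finite B0"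
      using finite_subset[OF assms(3,2)] .
    then obtain a where a: "x = (\<Sum>b\<in>B0. a b *s b)"
      using x(1) by (auto simp: span_finite)
    obtain c where c: "x = (\<Sum>b\<in>B - B0. c b *s b)"
      using x(2) assms(2) by (auto simp: span_finite)
    define e where "e b = (if b \<in> B0 then a b else - c b)" for b
    have "(\<Sum>b\<in>B. e b *s b) = (\<Sum>b\<in>B - B0. e b *s b) + (\<Sum>b\<in>B0. e b *s b)"
      using sum.subset_diff[OF assms(3,2)] by blast
    also have "\<dots> = 0"
      using a c by (simp add: e_def sum_negf)
    finally have e0: "e b = 0" if "b \<in> B" for b
      using independentD[OF assms(1,2) order_refl] that by blast
    have "a b = 0" if "b \<in> B0" for b
      using e0[of b] that assms(3) by (auto simp: e_def)
    then show "x = 0"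
      using a by simp
  qed
  then show ?thesis
    using span_zero by blast
qed

lemma independent_image_Un:
  assumes f: "Vector_Spaces.linear scale scale f"
    and B: "finite B" "independent B" and C: "finite C" "independent C"
    and ker: "\<And>w. w \<in> span B \<Longrightarrow> f w \<in> span C \<Longrightarrow> w = 0"
  shows "independent (f ` B \<union> C) \<and> card (f ` B \<union> C) = card B + card C"
  using B ker
proof (induction B rule: finite_induct)
  case empty
  then show ?case
    using C by simp
next
  case (insert b B)
  interpret lf: Vector_Spaces.linear scale scale f by (fact f)
  have span_B: "span B \<subseteq> span (insert b B)"
    by (rule span_mono) blast
  have indep: "independent B"
    using insert.prems(1) by (rule independent_mono) blast
  have ker: "w = 0" if "w \<in> span B" "f w \<in> span C" for w
    by (rule insert.prems(2)) (use that span_B in auto)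
  note IH = insert.IH[OF indep ker]
  have "f b \<notin> span (f ` B \<union> C)"
  proof
    assume "f b \<in> span (f ` B \<union> C)"
    then obtain y z where yz: "f b = y + z" "y \<in> span (f ` B)" "z \<in> span C"
      unfolding span_Un by blast
    then obtain w where w: "w \<in> span B" "y = f w"
      unfolding lf.span_image by blast
    have "b \<in> span (insert b B)"
      by (rule span_base) simp
    then have "b - w \<in> span (insert b B)"
      using w(1) span_B by (simp add: span_diff subsetD)
    moreover have "f (b - w) \<in> span C"
      using yz w by (simp add: lf.diff)
    ultimately have "b - w = 0"
      by (rule insert.prems(2))
    then show False
      using insert.prems(1) insert.hyps(2) w(1) by (simp add: independent_insert)
  qed
  moreover have "f b \<notin> f ` B \<union> C"
    using calculation span_base by auto
  ultimately show ?case
    using IH insert.hyps C(1) by (simp add: independent_insertI)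
qed

lemma independent_image_Diff_Un:
  assumes f: "Vector_Spaces.linear scale scale f"
    and B: "finite B" "independent B" "B0 \<subseteq> B" and C: "finite C" "independent C"
    and ker: "\<And>w. w \<in> span B \<Longrightarrow> f w \<in> span C \<Longrightarrow> w \<in> span B0"
  shows "independent (f ` (B - B0) \<union> C) \<and> card (f ` (B - B0) \<union> C) = card (B - B0) + card C"
proof (rule independent_image_Un[OF f _ _ C])
  show "independent (B - B0)"
    using B(2) by (rule independent_mono) blast
  fix w assume "w \<in> span (B - B0)" "f w \<in> span C"
  moreover have "span (B - B0) \<subseteq> span B"
    by (rule span_mono) blast
  ultimately show "w = 0"
    using ker span_Int_span_Diff[OF B(2,1,3)] by blast
qed (use B(1) in simp)

lemma sum_subset_span_image_Un:
  assumes f: "Vector_Spaces.linear scale scale f"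
    and "V \<subseteq> span B" "B0 \<subseteq> B" "\<And>v. v \<in> span B0 \<Longrightarrow> f v \<in> U" "subspace U" "U \<subseteq> span C"
  shows "{f v + u | v u. v \<in> V \<and> u \<in> U} \<subseteq> span (f ` (B - B0) \<union> C)"
proof safe
  interpret lf: Vector_Spaces.linear scale scale f by (fact f)
  fix v u assume "v \<in> V" "u \<in> U"
  then have "v \<in> span ((B - B0) \<union> B0)"
    using assms(2,3) by (auto simp: Un_absorb2)
  then obtain v1 v0 where v: "v = v1 + v0" "v1 \<in> span (B - B0)" "v0 \<in> span B0"
    unfolding span_Un by blast
  have "f v0 + u \<in> span C"
    using assms(4)[OF v(3)] \<open>u \<in> U\<close> assms(5,6) subspace_add by blast
  moreover have "f v1 \<in> span (f ` (B - B0))"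
    using v(2) lf.span_image by auto
  moreover have "span (f ` (B - B0)) \<subseteq> span (f ` (B - B0) \<union> C)" "span C \<subseteq> span (f ` (B - B0) \<union> C)"
    by (simp_all add: span_mono)
  ultimately have "f v1 + (f v0 + u) \<in> span (f ` (B - B0) \<union> C)"
    by (auto intro: span_add)
  then show "f v + u \<in> span (f ` (B - B0) \<union> C)"
    using v(1) by (simp add: lf.add add.assoc)
qed

lemma dim_preimage_plus_dim_sum:
  assumes f: "Vector_Spaces.linear scale scale f"
    and V: "subspace V" "V \<subseteq> span F" "finite F"
    and U: "subspace U" "U \<subseteq> span G" "finite G"
  shows "dim V + dim U = dim {v \<in> V. f v \<in> U} + dim {f v + u | v u. v \<in> V \<and> u \<in> U}"
    (is "_ = dim ?V0 + dim ?S")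
proof -
  interpret lf: Vector_Spaces.linear scale scale f by (fact f)
  have "subspace ?V0"
    using subspace_inter[OF V(1) lf.subspace_vimage[OF U(1)]] by (simp add: Int_def vimage_def)
  obtain B0 where B0: "B0 \<subseteq> ?V0" "independent B0" "?V0 \<subseteq> span B0" "card B0 = dim ?V0"
    using basis_exists by blast
  obtain B where B: "B0 \<subseteq> B" "B \<subseteq> V" "independent B" "V \<subseteq> span B"
    using maximal_independent_subset_extend[of B0 V] B0(1,2) by auto
  obtain C where C: "C \<subseteq> U" "independent C" "U \<subseteq> span C" "card C = dim U"
    using basis_exists by blast
  have fin: "finite B" "finite C"
    using independent_span_bound[OF V(3) B(3)] independent_span_bound[OF U(3) C(2)] B(2) C(1) V U
    by auto
  have span_C: "span C = U"
    using span_subspace[OF C(1,3) U(1)] .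
  have span_B0: "span B0 \<subseteq> ?V0"
    using span_minimal[OF B0(1) \<open>subspace ?V0\<close>] .
  have "w \<in> span B0" if "w \<in> span B" "f w \<in> span C" for w
    using that span_minimal[OF B(2) V(1)] span_C B0(3) by auto
  then have indep: "independent (f ` (B - B0) \<union> C)"
    and card: "card (f ` (B - B0) \<union> C) = card (B - B0) + card C"
    using independent_image_Diff_Un[OF f fin(1) B(3,1) fin(2) C(2)] by auto
  have "f b \<in> ?S" if "b \<in> B" for b
  proof -
    have "f b = f b + 0"
      by simp
    then show ?thesis
      using that B(2) subspace_0[OF U(1)] by blast
  qed
  moreover have "c \<in> ?S" if "c \<in> C" for c
  proof -
    have "c = f 0 + c"
      by simp
    then show ?thesis
      using that C(1) subspace_0[OF V(1)] by blast
  qed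
  ultimately have "f ` (B - B0) \<union> C \<subseteq> ?S"
    by blast
  moreover have "?S \<subseteq> span (f ` (B - B0) \<union> C)"
    using sum_subset_span_image_Un[OF f B(4,1) _ U(1) C(3)] span_B0 by blast
  ultimately have "dim ?S = card (B - B0) + card C"
    using basis_card_eq_dim[OF _ _ indep] card by simp
  moreover have "card B = dim V"
    using basis_card_eq_dim[OF B(2,4,3)] .
  moreover have "card (B - B0) = card B - card B0" "card B0 \<le> card B"
    using B(1) fin(1) by (auto simp: card_Diff_subset finite_subset card_mono)
  ultimately show ?thesis
    using B0(4) C(4) by linarith
qed

end

section \<open>Polynomials as a graded vector space\<close>

lemma scal_eq_const_mult: "scal c p = Poly_Mapping.single 0 c * p"
  unfolding scal_def by (rule mult_map_scale_conv_mult)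

lemma lookup_scal [simp]: "Poly_Mapping.lookup (scal c p) m = c * Poly_Mapping.lookup p m"
  unfolding scal_def by (simp add: map.rep_eq when_def)

interpretation vs: vector_space "scal :: 'k::field \<Rightarrow> 'k mpoly \<Rightarrow> 'k mpoly"
proof unfold_locales
  fix a b :: 'k and x y :: "'k mpoly"
  show "scal a (x + y) = scal a x + scal a y"
    by (simp add: scal_eq_const_mult algebra_simps)
  show "scal (a + b) x = scal a x + scal b x"
    by (simp add: scal_eq_const_mult algebra_simps single_add)
  show "scal a (scal b x) = scal (a * b) x"
    by (simp add: scal_eq_const_mult mult.assoc[symmetric] mult_single)
  show "scal 1 x = x"
    by (simp add: scal_eq_const_mult)
qed

lemma mult_scal_left: "scal c p * q = scal c (p * q)"
  by (simp add: scal_eq_const_mult mult.assoc)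

lemma mult_scal_right: "p * scal c q = scal c (p * q)"
  by (simp add: scal_eq_const_mult mult.left_commute)

lemma linear_mult_left: "Vector_Spaces.linear scal scal (\<lambda>q. p * q :: 'k::field mpoly)"
  unfolding Vector_Spaces.linear_iff using vs.vector_space_axioms by (simp add: distrib_left mult_scal_right)

lemma keys_scal_subset: "Poly_Mapping.keys (scal c p) \<subseteq> Poly_Mapping.keys p"
  by (auto simp: in_keys_iff)

lemma sum_single_lookup: "(\<Sum>m\<in>Poly_Mapping.keys p. Poly_Mapping.single m (Poly_Mapping.lookup p m)) = p"
proof (rule poly_mapping_eqI)
  fix k
  have "(\<Sum>m\<in>Poly_Mapping.keys p. Poly_Mapping.lookup (Poly_Mapping.single m (Poly_Mapping.lookup p m)) k)
      = (\<Sum>m\<in>Poly_Mapping.keys p. if m = k then Poly_Mapping.lookup p m else 0)"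
    by (intro sum.cong) (auto simp: lookup_single when_def)
  then show "Poly_Mapping.lookup (\<Sum>m\<in>Poly_Mapping.keys p. Poly_Mapping.single m (Poly_Mapping.lookup p m)) k
      = Poly_Mapping.lookup p k"
    by (simp add: lookup_sum in_keys_iff)
qed

lemma single_eq_scal: "Poly_Mapping.single m c = scal c (Poly_Mapping.single m (1::'k::field))"
  by (rule poly_mapping_eqI) (simp add: lookup_single when_def)

lemma sum_scal_single_lookup:
  "(\<Sum>m\<in>Poly_Mapping.keys p. scal (Poly_Mapping.lookup p m) (Poly_Mapping.single m 1)) = p"
  by (subst (3) sum_single_lookup[of p, symmetric]) (simp add: single_eq_scal[symmetric])

lemma keys_add_nat: "Poly_Mapping.keys (a + b :: nat \<Rightarrow>\<^sub>0 nat) = Poly_Mapping.keys a \<union> Poly_Mapping.keys b"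
  by (auto simp: in_keys_iff lookup_add)

lemma mdeg_eq_sum: "finite S \<Longrightarrow> Poly_Mapping.keys m \<subseteq> S \<Longrightarrow> mdeg m = sum (Poly_Mapping.lookup m) S"
  unfolding mdeg_def by (rule sum.mono_neutral_left) (auto simp: in_keys_iff)

lemma mdeg_add: "mdeg (a + b) = mdeg a + mdeg b"
proof -
  let ?S = "Poly_Mapping.keys a \<union> Poly_Mapping.keys b"
  have "mdeg (a + b) = sum (Poly_Mapping.lookup (a + b)) ?S"
    by (rule mdeg_eq_sum) (auto simp: keys_add_nat)
  also have "\<dots> = sum (Poly_Mapping.lookup a) ?S + sum (Poly_Mapping.lookup b) ?S"
    by (simp add: lookup_add sum.distrib)
  also have "\<dots> = mdeg a + mdeg b"
    using mdeg_eq_sum[of ?S a] mdeg_eq_sum[of ?S b] by simp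
  finally show ?thesis .
qed

lemma mdeg_single [simp]: "mdeg (Poly_Mapping.single i k) = k"
  unfolding mdeg_def by simp

lemma lookup_le_mdeg: "Poly_Mapping.lookup m i \<le> mdeg m"
  unfolding mdeg_def by (cases "i \<in> Poly_Mapping.keys m") (auto intro: member_le_sum simp: in_keys_iff)

definition homogeneous :: "nat \<Rightarrow> 'k::field mpoly \<Rightarrow> bool" where
  "homogeneous j p \<longleftrightarrow> (\<forall>m\<in>Poly_Mapping.keys p. mdeg m = j)"

lemma mem_hompart_iff: "p \<in> hompart n j \<longleftrightarrow> p \<in> polyring n \<and> homogeneous j p"
  unfolding hompart_def homogeneous_def by auto

lemma homogeneous_add: "homogeneous j p \<Longrightarrow> homogeneous j q \<Longrightarrow> homogeneous j (p + q)"
  unfolding homogeneous_def using keys_add[of p q] by blast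

lemma homogeneous_scal: "homogeneous j p \<Longrightarrow> homogeneous j (scal c p)"
  unfolding homogeneous_def using keys_scal_subset[of c p] by blast

lemma homogeneous_single: "homogeneous (mdeg m) (Poly_Mapping.single m c)"
  unfolding homogeneous_def by simp

lemma homogeneous_mult:
  assumes "homogeneous a p" "homogeneous b q"
  shows "homogeneous (a + b) (p * q)"
  unfolding homogeneous_def
proof
  fix m assume "m \<in> Poly_Mapping.keys (p * q)"
  then obtain x y where "m = x + y" "x \<in> Poly_Mapping.keys p" "y \<in> Poly_Mapping.keys q"
    using keys_mult[of p q] by blast
  then show "mdeg m = a + b"
    using assms unfolding homogeneous_def by (simp add: mdeg_add)
qed

lemma polyring_0 [simp]: "0 \<in> polyring n"
  unfolding polyring_def by simp

lemma polyring_add: "p \<in> polyring n \<Longrightarrow> q \<in> polyring n \<Longrightarrow> p + q \<in> polyring n"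
  unfolding polyring_def using keys_add[of p q] by blast

lemma polyring_uminus: "p \<in> polyring n \<Longrightarrow> - p \<in> polyring n"
  unfolding polyring_def by simp

lemma polyring_scal: "p \<in> polyring n \<Longrightarrow> scal c p \<in> polyring n"
  unfolding polyring_def using keys_scal_subset[of c p] by blast

lemma polyring_sum: "(\<And>x. x \<in> A \<Longrightarrow> f x \<in> polyring n) \<Longrightarrow> sum f A \<in> polyring n"
  by (induction A rule: infinite_finite_induct) (auto intro: polyring_add)

lemma polyring_mult:
  assumes "p \<in> polyring n" "q \<in> polyring n"
  shows "p * q \<in> polyring n"
  unfolding polyring_def
proof (intro CollectI ballI)
  fix m assume "m \<in> Poly_Mapping.keys (p * q)"
  then obtain x y where "m = x + y" "x \<in> Poly_Mapping.keys p" "y \<in> Poly_Mapping.keys q"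
    using keys_mult[of p q] by blast
  then show "Poly_Mapping.keys m \<subseteq> {..<n}"
    using assms unfolding polyring_def by (simp add: keys_add_nat)
qed

lemma polyring_single: "Poly_Mapping.keys m \<subseteq> {..<n} \<Longrightarrow> Poly_Mapping.single m c \<in> polyring n"
  unfolding polyring_def by simp

lemma polyring_const: "Poly_Mapping.single 0 c \<in> polyring n"
  by (rule polyring_single) simp

lemma polyring_one [simp]: "1 \<in> polyring n"
  using polyring_const[of 1 n] by simp

lemma polyring_prod: "(\<And>x. x \<in> A \<Longrightarrow> f x \<in> polyring n) \<Longrightarrow> prod f A \<in> polyring n"
  by (induction A rule: infinite_finite_induct) (auto intro: polyring_mult)

lemma hompart_subset_polyring: "hompart n j \<subseteq> polyring n"
  by (auto simp: mem_hompart_iff)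

lemma hompart_add: "p \<in> hompart n j \<Longrightarrow> q \<in> hompart n j \<Longrightarrow> p + q \<in> hompart n j"
  by (simp add: mem_hompart_iff polyring_add homogeneous_add)

lemma hompart_scal: "p \<in> hompart n j \<Longrightarrow> scal c p \<in> hompart n j"
  by (simp add: mem_hompart_iff polyring_scal homogeneous_scal)

lemma zero_mem_hompart [simp]: "0 \<in> hompart n j"
  by (simp add: mem_hompart_iff polyring_def homogeneous_def)

lemma hompart_mult: "p \<in> hompart n a \<Longrightarrow> q \<in> hompart n b \<Longrightarrow> c = a + b \<Longrightarrow> p * q \<in> hompart n c"
  by (simp add: mem_hompart_iff polyring_mult homogeneous_mult)

lemma hompart_sum: "(\<And>x. x \<in> A \<Longrightarrow> f x \<in> hompart n j) \<Longrightarrow> sum f A \<in> hompart n j"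
  by (induction A rule: infinite_finite_induct) (auto intro: hompart_add)

lemma subspace_hompart: "vs.subspace (hompart n j)"
  by (rule vs.subspaceI) (simp_all add: hompart_add hompart_scal)

lemma lookup_homcomp:
  "Poly_Mapping.lookup (homcomp j p) m = (if mdeg m = j then Poly_Mapping.lookup p m else 0)"
proof -
  have "Poly_Mapping.lookup (homcomp j p) m =
     (\<Sum>m'\<in>{m' \<in> Poly_Mapping.keys p. mdeg m' = j}. if m' = m then Poly_Mapping.lookup p m' else 0)"
    unfolding homcomp_def lookup_sum by (intro sum.cong) (auto simp: lookup_single when_def)
  then show ?thesis
    by (auto simp: in_keys_iff)
qed

lemma homcomp_add: "homcomp j (p + q) = homcomp j p + homcomp j q"
  by (rule poly_mapping_eqI) (simp add: lookup_homcomp lookup_add)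

lemma homcomp_0 [simp]: "homcomp j 0 = 0"
  by (rule poly_mapping_eqI) (simp add: lookup_homcomp)

lemma homcomp_sum: "homcomp j (sum f A) = (\<Sum>x\<in>A. homcomp j (f x))"
  by (induction A rule: infinite_finite_induct) (auto simp: homcomp_add)

lemma homcomp_eq_self: "homogeneous j p \<Longrightarrow> homcomp j p = p"
  by (rule poly_mapping_eqI) (auto simp: lookup_homcomp homogeneous_def in_keys_iff)

lemma homcomp_eq_0: "homogeneous j p \<Longrightarrow> i \<noteq> j \<Longrightarrow> homcomp i p = 0"
  by (rule poly_mapping_eqI) (auto simp: lookup_homcomp homogeneous_def in_keys_iff)

lemma homcomp_mem_hompart: "p \<in> polyring n \<Longrightarrow> homcomp j p \<in> hompart n j"
  by (auto simp: mem_hompart_iff homogeneous_def polyring_def in_keys_iff lookup_homcomp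
      split: if_splits)

lemma homcomp_mult:
  assumes "homogeneous e g"
  shows "homcomp (j + e) (q * g) = homcomp j q * g"
proof -
  let ?t = "\<lambda>m. Poly_Mapping.single m (Poly_Mapping.lookup q m) * g"
  have hom: "homogeneous (mdeg m + e) (?t m)" for m
    by (rule homogeneous_mult[OF homogeneous_single assms])
  have "homcomp (j + e) (q * g) = (\<Sum>m\<in>Poly_Mapping.keys q. homcomp (j + e) (?t m))"
    by (subst sum_single_lookup[of q, symmetric]) (simp add: sum_distrib_right homcomp_sum)
  also have "\<dots> = (\<Sum>m\<in>Poly_Mapping.keys q. if mdeg m = j then ?t m else 0)"
    using homcomp_eq_self[OF hom] homcomp_eq_0[OF hom] by (intro sum.cong) auto
  also have "\<dots> = (\<Sum>m\<in>{m\<in>Poly_Mapping.keys q. mdeg m = j}. ?t m)"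
    by (simp add: sum.inter_filter)
  also have "\<dots> = homcomp j q * g"
    unfolding homcomp_def by (simp add: sum_distrib_right)
  finally show ?thesis .
qed

definition monomials :: "nat \<Rightarrow> nat \<Rightarrow> (nat \<Rightarrow>\<^sub>0 nat) set" where
  "monomials n j = {m. Poly_Mapping.keys m \<subseteq> {..<n} \<and> mdeg m = j}"

lemma finite_monomials: "finite (monomials n j)"
proof -
  let ?r = "\<lambda>m. restrict (Poly_Mapping.lookup m) {..<n}"
  have "inj_on ?r (monomials n j)"
  proof (rule inj_onI)
    fix a b assume ab: "a \<in> monomials n j" "b \<in> monomials n j" "?r a = ?r b"
    show "a = b"
    proof (rule poly_mapping_eqI)
      fix k
      show "Poly_Mapping.lookup a k = Poly_Mapping.lookup b k"
      proof (cases "k < n")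
        case True
        then show ?thesis
          using fun_cong[OF ab(3), of k] by simp
      next
        case False
        then have "k \<notin> Poly_Mapping.keys a" "k \<notin> Poly_Mapping.keys b"
          using ab(1,2) unfolding monomials_def by auto
        then show ?thesis
          by (simp add: in_keys_iff)
      qed
    qed
  qed
  moreover have "?r ` monomials n j \<subseteq> PiE {..<n} (\<lambda>_. {..j})"
    using lookup_le_mdeg by (auto simp: monomials_def PiE_iff split: if_splits)
  then have "finite (?r ` monomials n j)"
    by (rule finite_subset) (simp add: finite_PiE)
  ultimately show ?thesis
    using finite_imageD by blast
qed

definition monomial_polys :: "nat \<Rightarrow> nat \<Rightarrow> 'k::field mpoly set" where
  "monomial_polys n j = (\<lambda>m. Poly_Mapping.single m 1) ` monomials n j"

lemma finite_monomial_polys: "finite (monomial_polys n j)"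
  unfolding monomial_polys_def using finite_monomials by simp

lemma single_mem_hompart: "m \<in> monomials n j \<Longrightarrow> Poly_Mapping.single m c \<in> hompart n j"
  unfolding monomials_def using polyring_single[of m n c] homogeneous_single[of m c]
  by (auto simp: mem_hompart_iff)

lemma keys_subset_monomials: "p \<in> hompart n j \<Longrightarrow> Poly_Mapping.keys p \<subseteq> monomials n j"
  by (auto simp: hompart_def polyring_def monomials_def)

lemma hompart_subset_span_monomials: "hompart n j \<subseteq> vs.span (monomial_polys n j)"
proof
  fix p :: "'k::field mpoly" assume "p \<in> hompart n j"
  then have "(\<Sum>m\<in>Poly_Mapping.keys p. scal (Poly_Mapping.lookup p m) (Poly_Mapping.single m 1))
      \<in> vs.span (monomial_polys n j)"
    unfolding monomial_polys_def using keys_subset_monomials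
    by (blast intro: vs.span_sum vs.span_scale vs.span_base)
  then show "p \<in> vs.span (monomial_polys n j)"
    by (simp add: sum_scal_single_lookup)
qed

lemma var_mem_hompart: "i < n \<Longrightarrow> var i \<in> hompart n 1"
  unfolding var_def by (rule single_mem_hompart) (simp add: monomials_def)

lemma linform_eq_sum: "linform n c = (\<Sum>i<n. scal (c i) (var i))"
  unfolding linform_def var_def by (intro sum.cong refl) (rule single_eq_scal)

lemma linform_mem_hompart: "linform n c \<in> hompart n 1"
  unfolding linform_eq_sum by (intro hompart_sum hompart_scal var_mem_hompart) auto

lemma monomial_Suc_eq_var_mult:
  assumes "m \<in> monomials n (Suc j)"
  obtains i m' where "i < n" "m' \<in> monomials n j"
    "Poly_Mapping.single m (1::'k::field) = var i * Poly_Mapping.single m' 1"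
proof -
  obtain i where i: "i \<in> Poly_Mapping.keys m"
    using assms by (force simp: monomials_def mdeg_def)
  define m' where "m' = m - Poly_Mapping.single i 1"
  have m: "m = Poly_Mapping.single i 1 + m'"
    using i by (intro poly_mapping_eqI)
      (auto simp: m'_def lookup_add lookup_minus lookup_single when_def in_keys_iff)
  then have "m' \<in> monomials n j"
    using assms mdeg_add[of "Poly_Mapping.single i 1" m'] by (auto simp: monomials_def keys_add_nat)
  moreover have "i < n"
    using i assms by (auto simp: monomials_def)
  moreover have "Poly_Mapping.single m (1::'k) = var i * Poly_Mapping.single m' 1"
    unfolding var_def mult_single m[symmetric] by simp
  ultimately show ?thesis
    using that by blast
qed

section \<open>Graded ideals and linear forms\<close>

locale graded_ideal =
  fixes n :: nat and I :: "'k::field mpoly set"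
  assumes homogeneous_ideal: "homogeneous_ideal n I"
begin

abbreviation R :: "nat \<Rightarrow> 'k mpoly set" where
  "R j \<equiv> hompart n j"

lemma ideal_subset: "I \<subseteq> polyring n"
  and zero_mem: "0 \<in> I"
  and add_mem: "p \<in> I \<Longrightarrow> q \<in> I \<Longrightarrow> p + q \<in> I"
  and mult_mem: "r \<in> polyring n \<Longrightarrow> p \<in> I \<Longrightarrow> r * p \<in> I"
  and homcomp_mem: "p \<in> I \<Longrightarrow> homcomp j p \<in> I"
  using homogeneous_ideal unfolding homogeneous_ideal_def is_ideal_def by auto

lemma scal_mem: "p \<in> I \<Longrightarrow> scal c p \<in> I"
  unfolding scal_eq_const_mult by (rule mult_mem[OF polyring_const])

lemma diff_mem: "p \<in> I \<Longrightarrow> q \<in> I \<Longrightarrow> p - q \<in> I"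
  using add_mem[of p "scal (- 1) q"] scal_mem[of q "- 1"] by (simp add: scal_eq_const_mult single_uminus)

lemma sum_mem: "(\<And>x. x \<in> A \<Longrightarrow> f x \<in> I) \<Longrightarrow> sum f A \<in> I"
  by (induction A rule: infinite_finite_induct) (auto intro: add_mem zero_mem)

definition ideal_deg :: "nat \<Rightarrow> 'k mpoly set" where
  "ideal_deg j = I \<inter> R j"

definition colon_deg :: "'k mpoly set \<Rightarrow> nat \<Rightarrow> 'k mpoly set" where
  "colon_deg P j = {a \<in> R j. \<forall>p\<in>P. p * a \<in> I}"

text \<open>\<open>dim (0 :\<^sub>A L)\<^sub>j\<close>, where \<open>A = R/I\<close>.\<close>

definition ann_dim :: "'k mpoly \<Rightarrow> nat \<Rightarrow> int" where
  "ann_dim L j = int (vs.dim (colon_deg {L} j)) - int (vs.dim (ideal_deg j))"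

text \<open>The component of degree \<open>j + 1\<close> (not \<open>j\<close>) of \<open>I + (L)\<close>, for a linear form \<open>L\<close>.\<close>

definition ideal_plus_lin_deg :: "'k mpoly \<Rightarrow> nat \<Rightarrow> 'k mpoly set" where
  "ideal_plus_lin_deg L j = {L * v + u | v u. v \<in> R j \<and> u \<in> ideal_deg (Suc j)}"

lemma ideal_deg_subset: "ideal_deg j \<subseteq> R j"
  unfolding ideal_deg_def by blast

lemma subspace_ideal_deg: "vs.subspace (ideal_deg j)"
  unfolding ideal_deg_def
  by (rule vs.subspaceI) (auto intro: add_mem scal_mem zero_mem hompart_add hompart_scal)

lemma subspace_colon_deg: "vs.subspace (colon_deg P j)"
  unfolding colon_deg_def
  by (rule vs.subspaceI)
     (auto intro: add_mem scal_mem zero_mem hompart_add hompart_scal simp: distrib_left mult_scal_right)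

lemma colon_deg_antimono: "P \<subseteq> Q \<Longrightarrow> colon_deg Q j \<subseteq> colon_deg P j"
  unfolding colon_deg_def by blast

lemma colon_deg_subset: "colon_deg P j \<subseteq> R j"
  unfolding colon_deg_def by blast

lemma ideal_deg_subset_colon_deg: "P \<subseteq> polyring n \<Longrightarrow> ideal_deg j \<subseteq> colon_deg P j"
  unfolding ideal_deg_def colon_deg_def using mult_mem by blast

lemma ideal_plus_lin_deg_subset: "L \<in> R 1 \<Longrightarrow> ideal_plus_lin_deg L j \<subseteq> R (Suc j)"
  unfolding ideal_plus_lin_deg_def ideal_deg_def by (auto intro!: hompart_add hompart_mult)

lemma dim_mono_hompart: "A \<subseteq> B \<Longrightarrow> B \<subseteq> R j \<Longrightarrow> vs.dim A \<le> vs.dim B"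
  using vs.dim_le_dim_of_subset_span hompart_subset_span_monomials finite_monomial_polys
  by (metis order_trans)

lemma hvec_eq: "int (hvec n I j) = int (vs.dim (R j)) - int (vs.dim (ideal_deg j))"
  using dim_mono_hompart[OF ideal_deg_subset order_refl, of j]
  unfolding hvec_def kdim_def ideal_deg_def by simp

lemma hompart_subset_ideal_if_hvec_eq_0:
  assumes "hvec n I j = 0"
  shows "R j \<subseteq> I"
proof -
  have "vs.dim (ideal_deg j) = vs.dim (R j)"
    using assms hvec_eq[of j] dim_mono_hompart[OF ideal_deg_subset order_refl, of j] by simp
  then have "ideal_deg j = R j"
    using vs.subspace_eq_of_dim_eq[OF ideal_deg_subset hompart_subset_span_monomials
        finite_monomial_polys _ subspace_ideal_deg] by blast
  then show ?thesis
    unfolding ideal_deg_def by blast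
qed

lemma dim_hompart_plus_dim_ideal_deg:
  assumes "L \<in> R 1"
  shows "vs.dim (R j) + vs.dim (ideal_deg (Suc j)) =
    vs.dim (colon_deg {L} j) + vs.dim (ideal_plus_lin_deg L j)"
proof -
  have "{v \<in> R j. L * v \<in> ideal_deg (Suc j)} = colon_deg {L} j"
    unfolding colon_deg_def ideal_deg_def using assms by (auto intro: hompart_mult)
  then show ?thesis
    using vs.dim_preimage_plus_dim_sum[OF linear_mult_left[of L] subspace_hompart[of n j]
        hompart_subset_span_monomials finite_monomial_polys subspace_ideal_deg[of "Suc j"]
        order_trans[OF ideal_deg_subset hompart_subset_span_monomials] finite_monomial_polys]
    unfolding ideal_plus_lin_deg_def by simp
qed

lemma hvec_diff_le_ann_dim:
  assumes "L \<in> R 1"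
  shows "int (hvec n I j) - int (hvec n I (Suc j)) \<le> ann_dim L j"
  using dim_hompart_plus_dim_ideal_deg[OF assms, of j] hvec_eq[of j] hvec_eq[of "Suc j"]
    dim_mono_hompart[OF ideal_plus_lin_deg_subset[OF assms] order_refl, of j]
  unfolding ann_dim_def by linarith

lemma hvec_diff_eq_ann_dim:
  assumes "L \<in> R 1" "R (Suc j) \<subseteq> ideal_plus_lin_deg L j"
  shows "int (hvec n I j) - int (hvec n I (Suc j)) = ann_dim L j"
proof -
  have "ideal_plus_lin_deg L j = R (Suc j)"
    using assms ideal_plus_lin_deg_subset by blast
  then have "vs.dim (R j) + vs.dim (ideal_deg (Suc j)) = vs.dim (colon_deg {L} j) + vs.dim (R (Suc j))"
    using dim_hompart_plus_dim_ideal_deg[OF assms(1), of j] by simp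
  then show ?thesis
    using hvec_eq[of j] hvec_eq[of "Suc j"] unfolding ann_dim_def by linarith
qed

lemma dim_colon_deg_insert:
  assumes l: "l \<in> R 1" and P: "P \<subseteq> polyring n"
  shows "vs.dim (colon_deg P j) + vs.dim (ideal_deg (Suc j)) \<le>
    vs.dim (colon_deg (insert l P) j) + vs.dim (colon_deg P (Suc j))"
proof -
  have l_poly: "l \<in> polyring n"
    using l hompart_subset_polyring by blast
  have "{v \<in> colon_deg P j. l * v \<in> ideal_deg (Suc j)} = colon_deg (insert l P) j"
    unfolding colon_deg_def ideal_deg_def using l by (auto intro: hompart_mult)
  moreover have "{l * v + u | v u. v \<in> colon_deg P j \<and> u \<in> ideal_deg (Suc j)} \<subseteq> colon_deg P (Suc j)"
  proof safe
    fix v u assume v: "v \<in> colon_deg P j" and u: "u \<in> ideal_deg (Suc j)"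
    have "l * v + u \<in> R (Suc j)"
      using v u l unfolding colon_deg_def ideal_deg_def by (auto intro!: hompart_add hompart_mult)
    moreover have "p * (l * v + u) \<in> I" if "p \<in> P" for p
    proof -
      have "p * v \<in> I"
        using v that unfolding colon_deg_def by blast
      then have "l * (p * v) \<in> I"
        by (rule mult_mem[OF l_poly])
      moreover have "p * u \<in> I"
        using u that P mult_mem unfolding ideal_deg_def by blast
      moreover have "p * (l * v + u) = l * (p * v) + p * u"
        by (simp add: algebra_simps)
      ultimately show ?thesis
        by (simp add: add_mem)
    qed
    ultimately show "l * v + u \<in> colon_deg P (Suc j)"
      unfolding colon_deg_def by blast
  qed
  then have "vs.dim {l * v + u | v u. v \<in> colon_deg P j \<and> u \<in> ideal_deg (Suc j)}
      \<le> vs.dim (colon_deg P (Suc j))"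
    by (rule dim_mono_hompart[OF _ colon_deg_subset])
  moreover have "vs.dim (colon_deg P j) + vs.dim (ideal_deg (Suc j)) = vs.dim (colon_deg (insert l P) j)
      + vs.dim {l * v + u | v u. v \<in> colon_deg P j \<and> u \<in> ideal_deg (Suc j)}"
    using vs.dim_preimage_plus_dim_sum[OF linear_mult_left[of l] subspace_colon_deg
        order_trans[OF colon_deg_subset hompart_subset_span_monomials] finite_monomial_polys
        subspace_ideal_deg order_trans[OF ideal_deg_subset hompart_subset_span_monomials]
        finite_monomial_polys, of P j "Suc j"] calculation(1)
    by simp
  ultimately show ?thesis
    by linarith
qed

lemma var_mult_mem_if_linform_mult_mem:
  assumes "i < n" "c i \<noteq> 0" "linform n c * a \<in> I" "\<And>k. k < n \<Longrightarrow> k \<noteq> i \<Longrightarrow> var k * a \<in> I"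
  shows "var i * a \<in> I"
proof -
  have "linform n c * a = scal (c i) (var i * a) + (\<Sum>k\<in>{..<n} - {i}. scal (c k) (var k * a))"
    unfolding linform_eq_sum using assms(1)
    by (simp add: sum.remove distrib_right sum_distrib_right mult_scal_left)
  then have "scal (c i) (var i * a) = linform n c * a - (\<Sum>k\<in>{..<n} - {i}. scal (c k) (var k * a))"
    by (simp add: algebra_simps)
  also have "\<dots> \<in> I"
    using assms(3,4) by (intro diff_mem sum_mem scal_mem) auto
  finally have "scal (inverse (c i)) (scal (c i) (var i * a)) \<in> I"
    by (rule scal_mem)
  then show ?thesis
    using assms(2) by simp
qed

lemma dim_colon_deg_vars:
  assumes L: "L \<in> R 1" and S: "finite S" "S \<subseteq> {..<n}"
  shows "vs.dim (colon_deg {L} j) + card S * vs.dim (ideal_deg (Suc j))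
    \<le> vs.dim (colon_deg (insert L (var ` S)) j) + card S * vs.dim (colon_deg {L} (Suc j))"
  using S
proof (induction S rule: finite_induct)
  case empty
  then show ?case
    by simp
next
  case (insert i S)
  have "insert L (var ` S) \<subseteq> polyring n"
    using insert.prems L var_mem_hompart hompart_subset_polyring by blast
  then have "vs.dim (colon_deg (insert L (var ` S)) j) + vs.dim (ideal_deg (Suc j))
      \<le> vs.dim (colon_deg (insert L (var ` insert i S)) j) + vs.dim (colon_deg (insert L (var ` S)) (Suc j))"
    using dim_colon_deg_insert[OF var_mem_hompart, of i "insert L (var ` S)" j] insert.prems
    by (simp add: insert_commute)
  moreover have "vs.dim (colon_deg (insert L (var ` S)) (Suc j)) \<le> vs.dim (colon_deg {L} (Suc j))"
    by (rule dim_mono_hompart[OF colon_deg_antimono colon_deg_subset]) simp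
  ultimately show ?case
    using insert by simp
qed

lemma ann_dim_le_ann_dim_Suc:
  assumes L: "L = linform n c" and i0: "i0 < n" "c i0 \<noteq> 0"
    and socle: "\<And>a. a \<in> R j \<Longrightarrow> \<forall>i<n. var i * a \<in> I \<Longrightarrow> a \<in> I"
  shows "ann_dim L j \<le> (int n - 1) * ann_dim L (Suc j)"
proof -
  define S where "S = {..<n} - {i0}"
  have L_hom: "L \<in> R 1"
    using L linform_mem_hompart by simp
  have "colon_deg (insert L (var ` S)) j \<subseteq> ideal_deg j"
  proof
    fix a assume "a \<in> colon_deg (insert L (var ` S)) j"
    then have a: "a \<in> R j" "L * a \<in> I" "\<And>k. k < n \<Longrightarrow> k \<noteq> i0 \<Longrightarrow> var k * a \<in> I"
      unfolding colon_deg_def S_def by auto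
    then have "var i0 * a \<in> I"
      using var_mult_mem_if_linform_mult_mem i0 L by blast
    then have "a \<in> I"
      using socle[OF a(1)] a(3) by metis
    then show "a \<in> ideal_deg j"
      using a(1) unfolding ideal_deg_def by blast
  qed
  then have "vs.dim (colon_deg (insert L (var ` S)) j) \<le> vs.dim (ideal_deg j)"
    by (rule dim_mono_hompart[OF _ ideal_deg_subset])
  moreover have "vs.dim (ideal_deg (Suc j)) \<le> vs.dim (colon_deg {L} (Suc j))"
    using dim_mono_hompart[OF ideal_deg_subset_colon_deg colon_deg_subset] L_hom hompart_subset_polyring
    by blast
  moreover have "int (vs.dim (colon_deg {L} j)) + (int n - 1) * int (vs.dim (ideal_deg (Suc j)))
      \<le> int (vs.dim (colon_deg (insert L (var ` S)) j)) + (int n - 1) * int (vs.dim (colon_deg {L} (Suc j)))"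
  proof -
    have "int n - 1 = int (card S)"
      using i0(1) unfolding S_def by simp
    then show ?thesis
      using dim_colon_deg_vars[OF L_hom, of S j] unfolding S_def
      by (simp only: of_nat_mult[symmetric] of_nat_add[symmetric] of_nat_le_iff) auto
  qed
  ultimately show ?thesis
    unfolding ann_dim_def right_diff_distrib by linarith
qed

lemma hompart_inter_ideal_plus_lin_subset:
  assumes "L \<in> R 1" "p \<in> R (Suc j)" "p \<in> ideal_plus_lin n I L"
  shows "p \<in> ideal_plus_lin_deg L j"
proof -
  obtain a r where ar: "p = a + r * L" "a \<in> I" "r \<in> polyring n"
    using assms(3) unfolding ideal_plus_lin_def by blast
  have "homcomp (Suc j) (r * L) = homcomp j r * L"
    using homcomp_mult[of 1 L j r] assms(1) by (simp add: mem_hompart_iff)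
  moreover have "p = homcomp (Suc j) p"
    using assms(2) by (simp add: mem_hompart_iff homcomp_eq_self)
  ultimately have "p = L * homcomp j r + homcomp (Suc j) a"
    using ar(1) by (simp add: homcomp_add mult.commute add.commute)
  moreover have "homcomp (Suc j) a \<in> ideal_deg (Suc j)"
    unfolding ideal_deg_def using homcomp_mem[OF ar(2)] homcomp_mem_hompart ar(2) ideal_subset by blast
  moreover have "homcomp j r \<in> R j"
    using homcomp_mem_hompart[OF ar(3)] .
  ultimately show ?thesis
    unfolding ideal_plus_lin_deg_def by blast
qed

lemma subspace_ideal_plus_lin_deg: "vs.subspace (ideal_plus_lin_deg L j)"
proof (rule vs.subspaceI)
  show "0 \<in> ideal_plus_lin_deg L j"
    unfolding ideal_plus_lin_deg_def ideal_deg_def by (auto intro!: exI[of _ 0] zero_mem)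
next
  fix x y assume "x \<in> ideal_plus_lin_deg L j" "y \<in> ideal_plus_lin_deg L j"
  then obtain v1 u1 v2 u2 where "x = L * v1 + u1" "v1 \<in> R j" "u1 \<in> ideal_deg (Suc j)"
      "y = L * v2 + u2" "v2 \<in> R j" "u2 \<in> ideal_deg (Suc j)"
    unfolding ideal_plus_lin_deg_def by blast
  then have "x + y = L * (v1 + v2) + (u1 + u2)" "v1 + v2 \<in> R j" "u1 + u2 \<in> ideal_deg (Suc j)"
    unfolding ideal_deg_def by (auto simp: algebra_simps intro: hompart_add add_mem)
  then show "x + y \<in> ideal_plus_lin_deg L j"
    unfolding ideal_plus_lin_deg_def by blast
next
  fix c x assume "x \<in> ideal_plus_lin_deg L j"
  then obtain v u where "x = L * v + u" "v \<in> R j" "u \<in> ideal_deg (Suc j)"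
    unfolding ideal_plus_lin_deg_def by blast
  then have "scal c x = L * scal c v + scal c u" "scal c v \<in> R j" "scal c u \<in> ideal_deg (Suc j)"
    unfolding ideal_deg_def
    by (auto simp: mult_scal_right vs.scale_right_distrib intro: hompart_scal scal_mem)
  then show "scal c x \<in> ideal_plus_lin_deg L j"
    unfolding ideal_plus_lin_deg_def by blast
qed

lemma hompart_subset_ideal_plus_lin_deg_Suc:
  assumes L: "L \<in> R 1" and "R (Suc j) \<subseteq> ideal_plus_lin_deg L j"
  shows "R (Suc (Suc j)) \<subseteq> ideal_plus_lin_deg L (Suc j)"
proof -
  have "monomial_polys n (Suc (Suc j)) \<subseteq> ideal_plus_lin_deg L (Suc j)"
  proof
    fix x assume "x \<in> (monomial_polys n (Suc (Suc j)) :: 'k mpoly set)"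
    then obtain m where m: "m \<in> monomials n (Suc (Suc j))" "x = Poly_Mapping.single m 1"
      unfolding monomial_polys_def by blast
    obtain i m' where im: "i < n" "m' \<in> monomials n (Suc j)"
      "Poly_Mapping.single m (1::'k) = var i * Poly_Mapping.single m' 1"
      using monomial_Suc_eq_var_mult[OF m(1)] by blast
    obtain v u where vu: "Poly_Mapping.single m' 1 = L * v + u" "v \<in> R j" "u \<in> ideal_deg (Suc j)"
      using assms(2) single_mem_hompart[OF im(2)] unfolding ideal_plus_lin_deg_def by blast
    have x_i: "var i \<in> R 1"
      using var_mem_hompart[OF im(1)] .
    have "x = L * (var i * v) + var i * u"
      using m(2) im(3) vu(1) by (simp add: algebra_simps)
    moreover have "var i * v \<in> R (Suc j)"
      using hompart_mult[OF x_i vu(2)] by simp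
    moreover have "var i * u \<in> ideal_deg (Suc (Suc j))"
      using vu(3) hompart_mult[OF x_i, of u "Suc j"] mult_mem[OF subsetD[OF hompart_subset_polyring x_i]]
      unfolding ideal_deg_def by auto
    ultimately show "x \<in> ideal_plus_lin_deg L (Suc j)"
      unfolding ideal_plus_lin_deg_def by blast
  qed
  then show ?thesis
    using vs.span_minimal[OF _ subspace_ideal_plus_lin_deg] hompart_subset_span_monomials by blast
qed

lemma hompart_subset_ideal_plus_lin_deg:
  assumes "L \<in> R 1" "R (Suc r) \<subseteq> ideal_plus_lin n I L" "r \<le> j"
  shows "R (Suc j) \<subseteq> ideal_plus_lin_deg L j"
  using assms(3)
proof (induction j rule: dec_induct)
  case base
  then show ?case
    using assms(1,2) hompart_inter_ideal_plus_lin_subset by blast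
next
  case (step j)
  then show ?case
    using hompart_subset_ideal_plus_lin_deg_Suc[OF assms(1)] by blast
qed

lemma level_socle_degree:
  assumes "level n I" "hvec n I s > 0" "hvec n I (Suc s) = 0"
  shows "\<forall>p\<in>socle_pre n I. p - homcomp s p \<in> I"
proof -
  obtain j0 where j0: "\<forall>p\<in>socle_pre n I. p - homcomp j0 p \<in> I"
    using assms(1) unfolding level_def by blast
  have "\<not> R s \<subseteq> I"
  proof
    assume "R s \<subseteq> I"
    then have "I \<inter> R s = R s"
      by blast
    then show False
      using assms(2) unfolding hvec_def by simp
  qed
  then obtain p where p: "p \<in> R s" "p \<notin> I"
    by blast
  have "var i * p \<in> I" if "i < n" for i
    using hompart_subset_ideal_if_hvec_eq_0[OF assms(3)] hompart_mult[OF var_mem_hompart[OF that] p(1)]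
    by auto
  then have "p - homcomp j0 p \<in> I"
    using j0 p(1) hompart_subset_polyring unfolding socle_pre_def by blast
  then have "j0 = s"
    using p homcomp_eq_0[of s p j0] by (cases "j0 = s") (auto simp: mem_hompart_iff)
  then show ?thesis
    using j0 by blast
qed

lemma level_socle_below_top:
  assumes "level n I" "hvec n I s > 0" "hvec n I (Suc s) = 0"
    and a: "a \<in> R j" "j < s" "\<forall>i<n. var i * a \<in> I"
  shows "a \<in> I"
proof -
  have "a \<in> socle_pre n I"
    using a hompart_subset_polyring unfolding socle_pre_def by blast
  then have "a - homcomp s a \<in> I"
    using level_socle_degree[OF assms(1-3)] by blast
  moreover have "homcomp s a = 0"
    using a(1,2) by (intro homcomp_eq_0) (auto simp: mem_hompart_iff)
  ultimately show ?thesis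
    by simp
qed

end

section \<open>Evaluation and Kronecker substitution\<close>

definition mon_eval :: "(nat \<Rightarrow> 'k::field) \<Rightarrow> (nat \<Rightarrow>\<^sub>0 nat) \<Rightarrow> 'k" where
  "mon_eval c m = (\<Prod>i\<in>Poly_Mapping.keys m. c i ^ Poly_Mapping.lookup m i)"

lemma meval_eq_sum_mon_eval:
  "meval f c = (\<Sum>m\<in>Poly_Mapping.keys f. Poly_Mapping.lookup f m * mon_eval c m)"
  unfolding meval_def mon_eval_def ..

lemma mon_eval_eq_prod:
  "finite S \<Longrightarrow> Poly_Mapping.keys m \<subseteq> S \<Longrightarrow> mon_eval c m = (\<Prod>i\<in>S. c i ^ Poly_Mapping.lookup m i)"
  unfolding mon_eval_def by (rule prod.mono_neutral_left) (auto simp: in_keys_iff)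

lemma mon_eval_add: "mon_eval c (a + b) = mon_eval c a * mon_eval c b"
proof -
  let ?S = "Poly_Mapping.keys a \<union> Poly_Mapping.keys b"
  have "mon_eval c (a + b) = (\<Prod>i\<in>?S. c i ^ Poly_Mapping.lookup (a + b) i)"
    by (rule mon_eval_eq_prod) (auto simp: keys_add_nat)
  also have "\<dots> = (\<Prod>i\<in>?S. c i ^ Poly_Mapping.lookup a i) * (\<Prod>i\<in>?S. c i ^ Poly_Mapping.lookup b i)"
    by (simp add: lookup_add power_add prod.distrib)
  also have "\<dots> = mon_eval c a * mon_eval c b"
    using mon_eval_eq_prod[of ?S a c] mon_eval_eq_prod[of ?S b c] by simp
  finally show ?thesis .
qed

lemma meval_eq_sum:
  "finite S \<Longrightarrow> Poly_Mapping.keys f \<subseteq> S \<Longrightarrow> meval f c = (\<Sum>m\<in>S. Poly_Mapping.lookup f m * mon_eval c m)"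
  unfolding meval_eq_sum_mon_eval by (rule sum.mono_neutral_left) (auto simp: in_keys_iff)

lemma meval_add: "meval (f + g) c = meval f c + meval g c"
proof -
  let ?S = "Poly_Mapping.keys f \<union> Poly_Mapping.keys g"
  have "meval (f + g) c = (\<Sum>m\<in>?S. Poly_Mapping.lookup (f + g) m * mon_eval c m)"
    by (rule meval_eq_sum) (use keys_add[of f g] in auto)
  also have "\<dots> = (\<Sum>m\<in>?S. Poly_Mapping.lookup f m * mon_eval c m)
      + (\<Sum>m\<in>?S. Poly_Mapping.lookup g m * mon_eval c m)"
    by (simp add: lookup_add distrib_right sum.distrib)
  also have "\<dots> = meval f c + meval g c"
    using meval_eq_sum[of ?S f c] meval_eq_sum[of ?S g c] by simp
  finally show ?thesis .
qed

lemma meval_0 [simp]: "meval 0 c = 0"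
  unfolding meval_def by simp

lemma meval_single: "meval (Poly_Mapping.single m a) c = a * mon_eval c m"
  unfolding meval_eq_sum_mon_eval by simp

lemma meval_sum: "meval (sum f A) c = (\<Sum>x\<in>A. meval (f x) c)"
  by (induction A rule: infinite_finite_induct) (auto simp: meval_add)

lemma meval_mult: "meval (p * q) c = meval p c * meval q c"
proof -
  have "p * q = (\<Sum>m\<in>Poly_Mapping.keys p. \<Sum>m'\<in>Poly_Mapping.keys q.
      Poly_Mapping.single m (Poly_Mapping.lookup p m) * Poly_Mapping.single m' (Poly_Mapping.lookup q m'))"
    by (subst (1) sum_single_lookup[of p, symmetric], subst (1) sum_single_lookup[of q, symmetric])
       (rule sum_product)
  then have "meval (p * q) c = (\<Sum>m\<in>Poly_Mapping.keys p. \<Sum>m'\<in>Poly_Mapping.keys q.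
      (Poly_Mapping.lookup p m * mon_eval c m) * (Poly_Mapping.lookup q m' * mon_eval c m'))"
    by (simp add: meval_sum mult_single meval_single mon_eval_add algebra_simps)
  also have "\<dots> = meval p c * meval q c"
    unfolding meval_eq_sum_mon_eval by (simp only: sum_product)
  finally show ?thesis .
qed

interpretation meval_hom: comm_ring_hom "\<lambda>p. meval p c"
  using meval_single[of 0 1 c] by unfold_locales (simp_all add: meval_add meval_mult mon_eval_def)

lemma meval_var: "meval (var i) c = c i"
  unfolding var_def meval_single mon_eval_def by simp

lemma sum_digits_less:
  assumes "\<forall>i<n. a i < (D::nat)"
  shows "(\<Sum>i<n. a i * D ^ i) < D ^ n"
  using assms
proof (induction n)
  case 0
  then show ?case
    by simp
next
  case (Suc n)
  have low: "(\<Sum>i<n. a i * D ^ i) < D ^ n"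
    using Suc by simp
  have "a n < D"
    using Suc.prems by simp
  then have "a n \<le> D - 1"
    by linarith
  then have top: "a n * D ^ n \<le> (D - 1) * D ^ n"
    by (rule mult_right_mono) simp
  moreover have "D ^ n + (D - 1) * D ^ n = D ^ Suc n"
    using \<open>a n < D\<close> by (cases D) (auto simp: algebra_simps)
  moreover have "(\<Sum>i<Suc n. a i * D ^ i) = (\<Sum>i<n. a i * D ^ i) + a n * D ^ n"
    by simp
  ultimately show ?case
    using low by linarith
qed

lemma sum_digits_inj:
  assumes "\<forall>i<n. a i < (D::nat)" "\<forall>i<n. b i < D"
    and "(\<Sum>i<n. a i * D ^ i) = (\<Sum>i<n. b i * D ^ i)"
  shows "\<forall>i<n. a i = b i"
  using assms
proof (induction n)
  case 0
  then show ?case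
    by simp
next
  case (Suc n)
  define A where "A = (\<Sum>i<n. a i * D ^ i)"
  define B where "B = (\<Sum>i<n. b i * D ^ i)"
  have a: "\<forall>i<n. a i < D" and b: "\<forall>i<n. b i < D"
    using Suc.prems by auto
  have "A < D ^ n" "B < D ^ n"
    unfolding A_def B_def using sum_digits_less a b by blast+
  moreover have "a n < D"
    using Suc.prems(1) by simp
  then have D: "D ^ n \<noteq> 0"
    by simp
  ultimately have "(a n * D ^ n + A) div D ^ n = a n" "(b n * D ^ n + B) div D ^ n = b n"
    using div_mult_self3[OF D] by simp_all
  moreover have eq: "a n * D ^ n + A = b n * D ^ n + B"
    using Suc.prems(3) unfolding A_def B_def by (simp add: add.commute)
  ultimately have "a n = b n"
    by simp
  with eq have "\<forall>i<n. a i = b i"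
    using Suc.IH[OF a b] unfolding A_def B_def by simp
  with \<open>a n = b n\<close> show ?case
    using less_Suc_eq by auto
qed

lemma inj_on_digit_encoding:
  fixes M :: "(nat \<Rightarrow>\<^sub>0 nat) set"
  assumes "\<And>m. m \<in> M \<Longrightarrow> Poly_Mapping.keys m \<subseteq> {..<n}" "\<And>m i. m \<in> M \<Longrightarrow> Poly_Mapping.lookup m i < D"
  shows "inj_on (\<lambda>m. \<Sum>i<n. Poly_Mapping.lookup m i * D ^ i) M"
proof (rule inj_onI)
  fix x y assume xy: "x \<in> M" "y \<in> M"
    "(\<Sum>i<n. Poly_Mapping.lookup x i * D ^ i) = (\<Sum>i<n. Poly_Mapping.lookup y i * D ^ i)"
  have "\<forall>i<n. Poly_Mapping.lookup x i < D" "\<forall>i<n. Poly_Mapping.lookup y i < D"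
    using assms(2) xy(1,2) by blast+
  then have low: "\<forall>i<n. Poly_Mapping.lookup x i = Poly_Mapping.lookup y i"
    using xy(3) by (rule sum_digits_inj)
  show "x = y"
  proof (rule poly_mapping_eqI)
    fix i
    show "Poly_Mapping.lookup x i = Poly_Mapping.lookup y i"
    proof (cases "i < n")
      case False
      then have "i \<notin> Poly_Mapping.keys x" "i \<notin> Poly_Mapping.keys y"
        using assms(1)[OF xy(1)] assms(1)[OF xy(2)] by auto
      then show ?thesis
        by (simp add: in_keys_iff)
    qed (use low in blast)
  qed
qed

text \<open>Substituting \<open>x\<^sub>i \<mapsto> t ^ D ^ i\<close> sends distinct monomials with exponents below \<open>D\<close> to
  distinct powers of \<open>t\<close>, so no cancellation can occur.\<close>

lemma kronecker_substitution:
  fixes f :: "'k::field mpoly"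
  assumes f: "f \<in> polyring n" "f \<noteq> 0"
    and D: "\<And>m i. m \<in> Poly_Mapping.keys f \<Longrightarrow> Poly_Mapping.lookup m i < D"
  obtains Q where "Q \<noteq> 0" "\<And>t. meval f (\<lambda>i. t ^ (D ^ i)) = poly Q t"
proof -
  define e where "e m = (\<Sum>i<n. Poly_Mapping.lookup m i * D ^ i)" for m
  define Q where "Q = (\<Sum>m\<in>Poly_Mapping.keys f. monom (Poly_Mapping.lookup f m) (e m))"
  have keys_m: "Poly_Mapping.keys m \<subseteq> {..<n}" if "m \<in> Poly_Mapping.keys f" for m
    using that f(1) unfolding polyring_def by auto
  have inj: "inj_on e (Poly_Mapping.keys f)"
    unfolding e_def using keys_m D by (rule inj_on_digit_encoding)
  obtain m0 where m0: "m0 \<in> Poly_Mapping.keys f"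
    using f(2) by fastforce
  have "coeff Q (e m0) = (\<Sum>m\<in>Poly_Mapping.keys f. if e m = e m0 then Poly_Mapping.lookup f m else 0)"
    unfolding Q_def coeff_sum by simp
  also have "\<dots> = (\<Sum>m\<in>Poly_Mapping.keys f. if m = m0 then Poly_Mapping.lookup f m else 0)"
    using inj_onD[OF inj _ _ m0] by (intro sum.cong refl) auto
  finally have "Q \<noteq> 0"
    using m0 by (auto simp: in_keys_iff)
  moreover have "meval f (\<lambda>i. t ^ (D ^ i)) = poly Q t" for t
  proof -
    have "mon_eval (\<lambda>i. t ^ (D ^ i)) m = t ^ e m" if "m \<in> Poly_Mapping.keys f" for m
      unfolding mon_eval_eq_prod[OF finite_lessThan keys_m[OF that]] e_def power_sum
      by (intro prod.cong refl) (simp add: power_mult[symmetric] mult.commute)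
    then show ?thesis
      unfolding meval_eq_sum_mon_eval Q_def poly_sum poly_monom by simp
  qed
  ultimately show ?thesis
    using that by blast
qed

lemma meval_nonzero_common:
  fixes f g :: "'k::field_char_0 mpoly"
  assumes "f \<in> polyring n" "f \<noteq> 0" "g \<in> polyring n" "g \<noteq> 0"
  shows "\<exists>c. meval f c \<noteq> 0 \<and> meval g c \<noteq> 0 \<and> (\<forall>i. c i \<noteq> 0)"
proof -
  define D where "D = Suc (\<Sum>m\<in>Poly_Mapping.keys f \<union> Poly_Mapping.keys g. mdeg m)"
  have D: "Poly_Mapping.lookup m i < D" if "m \<in> Poly_Mapping.keys f \<union> Poly_Mapping.keys g" for m i
  proof -
    have "Poly_Mapping.lookup m i \<le> (\<Sum>m\<in>Poly_Mapping.keys f \<union> Poly_Mapping.keys g. mdeg m)"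
      using lookup_le_mdeg[of m i] member_le_sum[OF that, of mdeg] by simp
    then show ?thesis
      unfolding D_def by simp
  qed
  obtain Qf where Qf: "Qf \<noteq> 0" "\<And>t. meval f (\<lambda>i. t ^ (D ^ i)) = poly Qf t"
    using kronecker_substitution[OF assms(1,2), of D] D by blast
  obtain Qg where Qg: "Qg \<noteq> 0" "\<And>t. meval g (\<lambda>i. t ^ (D ^ i)) = poly Qg t"
    using kronecker_substitution[OF assms(3,4), of D] D by blast
  have "Qf * Qg * [:0, 1:] \<noteq> 0"
    using Qf Qg by simp
  then have "finite {t. poly (Qf * Qg * [:0, 1:]) t = 0}"
    by (rule poly_roots_finite)
  then obtain t :: 'k where "poly (Qf * Qg * [:0, 1:]) t \<noteq> 0"
    using infinite_UNIV_char_0 by (metis (mono_tags, lifting) UNIV_eq_I mem_Collect_eq)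
  then show ?thesis
    using Qf Qg by (intro exI[of _ "\<lambda>i. t ^ (D ^ i)"]) auto
qed

section \<open>Generic linear forms\<close>

lemma var_mem_polyring: "i < n \<Longrightarrow> var i \<in> polyring n"
  using var_mem_hompart hompart_subset_polyring by blast

lemma polyring_det:
  assumes "A \<in> carrier_mat N N" "\<And>i j. i < N \<Longrightarrow> j < N \<Longrightarrow> A $$ (i, j) \<in> polyring n"
  shows "det (A :: 'k::field mpoly mat) \<in> polyring n"
proof -
  have "signof p \<in> polyring n" for p :: "nat \<Rightarrow> nat"
    using polyring_uminus[OF polyring_one] by (auto simp: sign_def)
  then show ?thesis
    unfolding det_def'[OF assms(1)] using assms(2)
    by (intro polyring_sum polyring_mult polyring_prod) (auto simp: permutes_in_image)
qed

definition linform_coeff_poly :: "nat \<Rightarrow> 'k::field mpoly \<Rightarrow> 'k mpoly \<Rightarrow> (nat \<Rightarrow>\<^sub>0 nat) \<Rightarrow> 'k mpoly" where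
  "linform_coeff_poly n u q m = Poly_Mapping.single 0 (Poly_Mapping.lookup u m) +
    (\<Sum>i<n. Poly_Mapping.single 0 (Poly_Mapping.lookup (var i * q) m) * var i)"

lemma linform_coeff_poly_mem_polyring: "linform_coeff_poly n u q m \<in> polyring n"
  unfolding linform_coeff_poly_def
  by (intro polyring_add polyring_sum polyring_mult polyring_const var_mem_polyring) auto

lemma meval_linform_coeff_poly:
  "meval (linform_coeff_poly n u q m) c = Poly_Mapping.lookup (u + linform n c * q) m"
proof -
  have "Poly_Mapping.lookup (linform n c * q) m = (\<Sum>i<n. c i * Poly_Mapping.lookup (var i * q) m)"
    unfolding linform_eq_sum by (simp add: sum_distrib_right mult_scal_left lookup_sum)
  then show ?thesis
    unfolding linform_coeff_poly_def
    by (simp add: meval_add meval_sum meval_mult meval_single meval_var mon_eval_def lookup_add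
        mult.commute)
qed

lemma combination_eq_monomial_if_right_inverse:
  fixes G :: "nat \<Rightarrow> 'k::field mpoly"
  assumes h: "bij_betw h {0..<N} (monomials n j)" and G: "\<And>k. k < N \<Longrightarrow> G k \<in> hompart n j"
    and B: "B \<in> carrier_mat N N" "mat N N (\<lambda>(i, k). Poly_Mapping.lookup (G k) (h i)) * B = 1\<^sub>m N"
    and l: "l < N"
  shows "(\<Sum>k\<in>{0..<N}. scal (B $$ (k, l)) (G k)) = Poly_Mapping.single (h l) 1"
proof (rule poly_mapping_eqI)
  fix m
  let ?M = "mat N N (\<lambda>(i, k). Poly_Mapping.lookup (G k) (h i))"
  show "Poly_Mapping.lookup (\<Sum>k\<in>{0..<N}. scal (B $$ (k, l)) (G k)) m
      = Poly_Mapping.lookup (Poly_Mapping.single (h l) 1) m"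
  proof (cases "m \<in> monomials n j")
    case True
    then have "m \<in> h ` {0..<N}"
      using bij_betw_imp_surj_on[OF h] by simp
    then obtain i where i: "i < N" "m = h i"
      by auto
    have "Poly_Mapping.lookup (\<Sum>k\<in>{0..<N}. scal (B $$ (k, l)) (G k)) m = (?M * B) $$ (i, l)"
      using B(1) i l by (simp add: lookup_sum scalar_prod_def mult.commute)
    also have "\<dots> = Poly_Mapping.lookup (Poly_Mapping.single (h l) 1) m"
      using B(2) i l h by (auto simp: bij_betw_def inj_on_def lookup_single when_def)
    finally show ?thesis .
  next
    case False
    then have "Poly_Mapping.lookup (G k) m = 0" if "k < N" for k
      using keys_subset_monomials[OF G[OF that]] by (auto simp: in_keys_iff)
    moreover have "h l \<noteq> m"
      using False h l by (auto simp: bij_betw_def)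
    ultimately show ?thesis
      by (simp add: lookup_sum lookup_single)
  qed
qed

lemma hompart_subset_if_det_nonzero:
  fixes G :: "nat \<Rightarrow> 'k::field mpoly"
  assumes h: "bij_betw h {0..<N} (monomials n j)"
    and G: "\<And>k. k < N \<Longrightarrow> G k \<in> hompart n j" "\<And>k. k < N \<Longrightarrow> G k \<in> W" and W: "vs.subspace W"
    and det: "det (mat N N (\<lambda>(i, k). Poly_Mapping.lookup (G k) (h i))) \<noteq> 0"
  shows "hompart n j \<subseteq> W"
proof -
  obtain B where B: "B \<in> carrier_mat N N" "mat N N (\<lambda>(i, k). Poly_Mapping.lookup (G k) (h i)) * B = 1\<^sub>m N"
    using det_non_zero_imp_unit[OF mat_carrier det, of "()"] unfolding Units_def ring_mat_def by auto
  have "Poly_Mapping.single (h l) 1 \<in> W" if "l < N" for l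
  proof -
    have "(\<Sum>k\<in>{0..<N}. scal (B $$ (k, l)) (G k)) \<in> W"
      using G(2) by (intro vs.subspace_sum[OF W] vs.subspace_scale[OF W]) auto
    then show ?thesis
      using combination_eq_monomial_if_right_inverse[OF h G(1) B that] by simp
  qed
  then have "monomial_polys n j \<subseteq> W"
    unfolding monomial_polys_def bij_betw_imp_surj_on[OF h, symmetric] by auto
  then show ?thesis
    using vs.span_minimal[OF _ W] hompart_subset_span_monomials by blast
qed

context graded_ideal
begin

lemma ideal_subset_ideal_plus_lin: "I \<subseteq> ideal_plus_lin n I L"
  unfolding ideal_plus_lin_def by (force intro: exI[of _ 0])

lemma subspace_ideal_plus_lin: "vs.subspace (ideal_plus_lin n I L)"
proof (rule vs.subspaceI)
  show "0 \<in> ideal_plus_lin n I L"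
    using ideal_subset_ideal_plus_lin zero_mem by blast
next
  fix x y assume "x \<in> ideal_plus_lin n I L" "y \<in> ideal_plus_lin n I L"
  then obtain a r b q where "x = a + r * L" "a \<in> I" "r \<in> polyring n"
      "y = b + q * L" "b \<in> I" "q \<in> polyring n"
    unfolding ideal_plus_lin_def by blast
  then have "x + y = (a + b) + (r + q) * L" "a + b \<in> I" "r + q \<in> polyring n"
    by (simp_all add: algebra_simps add_mem polyring_add)
  then show "x + y \<in> ideal_plus_lin n I L"
    unfolding ideal_plus_lin_def by blast
next
  fix c x assume "x \<in> ideal_plus_lin n I L"
  then obtain a r where "x = a + r * L" "a \<in> I" "r \<in> polyring n"
    unfolding ideal_plus_lin_def by blast
  then have "scal c x = scal c a + scal c r * L" "scal c a \<in> I" "scal c r \<in> polyring n"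
    by (simp_all add: mult_scal_left vs.scale_right_distrib scal_mem polyring_scal)
  then show "scal c x \<in> ideal_plus_lin n I L"
    unfolding ideal_plus_lin_def by blast
qed

lemma hompart_subset_ideal_plus_lin_red_num:
  assumes "\<exists>l. R (Suc l) \<subseteq> ideal_plus_lin n I L"
  shows "R (Suc (red_num_wrt n I L)) \<subseteq> ideal_plus_lin n I L"
  using LeastI_ex[of "\<lambda>l. R (l + 1) \<subseteq> ideal_plus_lin n I L"] assms
  unfolding red_num_wrt_def by simp

lemma red_num_wrt_le: "R (Suc l) \<subseteq> ideal_plus_lin n I L \<Longrightarrow> red_num_wrt n I L \<le> l"
  unfolding red_num_wrt_def by (rule Least_le) simp

lemma ex_hompart_subset_ideal_plus_lin:
  assumes "R N \<subseteq> I" "1 \<notin> I"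
  shows "\<exists>l. R (Suc l) \<subseteq> ideal_plus_lin n I L"
proof -
  have "(1 :: 'k mpoly) \<in> R 0"
    using single_mem_hompart[of 0 n 0 1] by (simp add: monomials_def mdeg_def)
  then have "N \<noteq> 0"
    using assms by (cases N) auto
  then show ?thesis
    using assms(1) ideal_subset_ideal_plus_lin by (metis not0_implies_Suc order_trans)
qed

lemma monomial_decompositions:
  fixes N :: nat
  assumes "L \<in> R 1" "R (Suc r) \<subseteq> ideal_plus_lin n I L" "bij_betw h {0..<N} (monomials n (Suc r))"
  obtains q u where "\<And>k. k < N \<Longrightarrow> Poly_Mapping.single (h k) 1 = L * q k + u k"
    "\<And>k. k < N \<Longrightarrow> q k \<in> R r" "\<And>k. k < N \<Longrightarrow> u k \<in> ideal_deg (Suc r)"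
proof -
  have "\<exists>q u. Poly_Mapping.single (h k) 1 = L * q + u \<and> q \<in> R r \<and> u \<in> ideal_deg (Suc r)"
    if k: "k < N" for k
  proof -
    have "h k \<in> monomials n (Suc r)"
      using bij_betwE[OF assms(3)] k by auto
    then have "Poly_Mapping.single (h k) 1 \<in> R (Suc r)"
      by (rule single_mem_hompart)
    then have "Poly_Mapping.single (h k) 1 \<in> ideal_plus_lin_deg L r"
      using hompart_subset_ideal_plus_lin_deg[OF assms(1,2) order_refl] by blast
    then show ?thesis
      unfolding ideal_plus_lin_deg_def by blast
  qed
  then show ?thesis
    using that by metis
qed

lemma red_num_wrt_le_if_det_nonzero:
  assumes h: "bij_betw h {0..<N} (monomials n (Suc r))"
    and qu: "\<And>k. k < N \<Longrightarrow> q k \<in> R r" "\<And>k. k < N \<Longrightarrow> u k \<in> ideal_deg (Suc r)"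
    and det: "det (mat N N (\<lambda>(i, k). meval (linform_coeff_poly n (u k) (q k) (h i)) c)) \<noteq> 0"
  shows "red_num_wrt n I (linform n c) \<le> r"
proof -
  define G where "G k = u k + linform n c * q k" for k
  have G_hom: "G k \<in> R (Suc r)" if "k < N" for k
    using qu(1,2)[OF that] unfolding G_def ideal_deg_def
    by (auto intro!: hompart_add hompart_mult[OF linform_mem_hompart])
  have G_ideal: "G k \<in> ideal_plus_lin n I (linform n c)" if "k < N" for k
  proof -
    have "G k = u k + q k * linform n c"
      by (simp add: G_def mult.commute)
    moreover have "u k \<in> I" "q k \<in> polyring n"
      using qu(1,2)[OF that] hompart_subset_polyring unfolding ideal_deg_def by auto
    ultimately show ?thesis
      unfolding ideal_plus_lin_def by blast
  qed
  have "det (mat N N (\<lambda>(i, k). Poly_Mapping.lookup (G k) (h i))) \<noteq> 0"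
    using det by (simp add: G_def meval_linform_coeff_poly)
  then show ?thesis
    using hompart_subset_if_det_nonzero[OF h G_hom G_ideal subspace_ideal_plus_lin]
    by (intro red_num_wrt_le) auto
qed

text \<open>The set of coefficient vectors \<open>c\<close> with \<open>red_num_wrt n I (linform n c) \<le> r\<close> contains a
  Zariski open neighbourhood of any of its points \<open>c\<^sub>0\<close>: write each monomial of degree \<open>r + 1\<close> as
  \<open>u\<^sub>k + L\<^sub>c\<^sub>0 q\<^sub>k\<close> and replace \<open>c\<^sub>0\<close> by \<open>c\<close>; the resulting family still spans as long as its
  coefficient determinant, a polynomial in \<open>c\<close>, does not vanish.\<close>

lemma red_num_wrt_le_near:
  assumes fin: "\<And>c. \<exists>l. R (Suc l) \<subseteq> ideal_plus_lin n I (linform n c)"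
  obtains D where "D \<in> polyring n" "meval D c0 \<noteq> 0"
    "\<And>c. meval D c \<noteq> 0 \<Longrightarrow> red_num_wrt n I (linform n c) \<le> red_num_wrt n I (linform n c0)"
proof -
  define r where "r = red_num_wrt n I (linform n c0)"
  define N where "N = card (monomials n (Suc r))"
  obtain h where h: "bij_betw h {0..<N} (monomials n (Suc r))"
    unfolding N_def using ex_bij_betw_nat_finite[OF finite_monomials] by blast
  obtain q u where qu: "\<And>k. k < N \<Longrightarrow> Poly_Mapping.single (h k) 1 = linform n c0 * q k + u k"
      "\<And>k. k < N \<Longrightarrow> q k \<in> R r" "\<And>k. k < N \<Longrightarrow> u k \<in> ideal_deg (Suc r)"
    using monomial_decompositions[OF linform_mem_hompart
        hompart_subset_ideal_plus_lin_red_num[OF fin] h[unfolded r_def]] unfolding r_def by blast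
  define E where "E i k = linform_coeff_poly n (u k) (q k) (h i)" for i k
  define D where "D = det (mat N N (\<lambda>(i, k). E i k))"
  have D_eval: "meval D c = det (mat N N (\<lambda>(i, k). meval (E i k) c))" for c
  proof -
    have "map_mat (\<lambda>p. meval p c) (mat N N (\<lambda>(i, k). E i k)) = mat N N (\<lambda>(i, k). meval (E i k) c)"
      by (rule eq_matI) auto
    then show ?thesis
      unfolding D_def using meval_hom.hom_det by metis
  qed
  have "meval (E i k) c0 = Poly_Mapping.lookup (Poly_Mapping.single (h k) 1) (h i)" if "k < N" for i k
    using qu(1)[OF that] by (simp add: E_def meval_linform_coeff_poly add.commute)
  then have "mat N N (\<lambda>(i, k). meval (E i k) c0) = 1\<^sub>m N"
    using h by (intro eq_matI) (auto simp: bij_betw_def inj_on_def lookup_single when_def)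
  then have "meval D c0 \<noteq> 0"
    using D_eval by simp
  moreover have "D \<in> polyring n"
    unfolding D_def E_def by (rule polyring_det) (auto simp: linform_coeff_poly_mem_polyring)
  moreover have "red_num_wrt n I (linform n c) \<le> r" if "meval D c \<noteq> 0" for c
    using red_num_wrt_le_if_det_nonzero[OF h qu(2,3)] that D_eval unfolding E_def by simp
  ultimately show ?thesis
    using that unfolding r_def by blast
qed

end

lemma r1_eqI:
  fixes I :: "'k::field_char_0 mpoly set"
  assumes "f \<in> polyring n" "f \<noteq> 0" "\<And>c. meval f c \<noteq> 0 \<Longrightarrow> red_num_wrt n I (linform n c) = r"
  shows "r1 n I = r"
  unfolding r1_def
proof (rule the_equality)
  show "\<exists>f::'k mpoly. f \<in> polyring n \<and> f \<noteq> 0 \<and> (\<forall>c. meval f c \<noteq> 0 \<longrightarrow> red_num_wrt n I (linform n c) = r)"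
    using assms by blast
next
  fix r' assume "\<exists>g::'k mpoly. g \<in> polyring n \<and> g \<noteq> 0 \<and>
      (\<forall>c. meval g c \<noteq> 0 \<longrightarrow> red_num_wrt n I (linform n c) = r')"
  then obtain g :: "'k mpoly" where g: "g \<in> polyring n" "g \<noteq> 0"
      "\<And>c. meval g c \<noteq> 0 \<Longrightarrow> red_num_wrt n I (linform n c) = r'"
    by blast
  obtain c where "meval f c \<noteq> 0" "meval g c \<noteq> 0"
    using meval_nonzero_common[OF assms(1,2) g(1,2)] by blast
  then show "r' = r"
    using assms(3) g(3) by metis
qed

text \<open>The minimum of the reduction numbers is attained on a nonempty Zariski open set, so it is \<open>r\<^sub>1\<close>.\<close>

lemma r1_attained:
  fixes I :: "'k::field_char_0 mpoly set"
  assumes "graded_artinian n I"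
  obtains c where "red_num_wrt n I (linform n c) = r1 n I" "\<forall>i. c i \<noteq> 0"
proof -
  interpret graded_ideal n I
    using assms by (simp add: graded_artinian_def graded_ideal_def)
  have fin: "\<exists>l. R (Suc l) \<subseteq> ideal_plus_lin n I (linform n c)" for c
    using assms ex_hompart_subset_ideal_plus_lin unfolding graded_artinian_def by blast
  define red where "red c = red_num_wrt n I (linform n c)" for c
  obtain c0 where c0: "\<And>c. red c0 \<le> red c"
    using ex_has_least_nat[where P = "\<lambda>_. True" and m = red] by auto
  obtain D where D: "D \<in> polyring n" "meval D c0 \<noteq> 0" "\<And>c. meval D c \<noteq> 0 \<Longrightarrow> red c \<le> red c0"
    using red_num_wrt_le_near[OF fin] unfolding red_def by blast
  have "D \<noteq> 0"
    using D(2) by auto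
  have generic: "red c = red c0" if "meval D c \<noteq> 0" for c
    using D(3)[OF that] c0[of c] by simp
  then have "r1 n I = red c0"
    using r1_eqI[OF D(1) \<open>D \<noteq> 0\<close>] unfolding red_def by blast
  moreover obtain c where "meval D c \<noteq> 0" "\<forall>i. c i \<noteq> 0"
    using meval_nonzero_common[OF D(1) \<open>D \<noteq> 0\<close> D(1) \<open>D \<noteq> 0\<close>] by blast
  ultimately show ?thesis
    using that generic unfolding red_def by metis
qed

section \<open>The Hilbert function after a drop\<close>

lemma hvec_no_variables:
  fixes I :: "'k::field mpoly set"
  assumes "j \<noteq> 0"
  shows "hvec 0 I j = 0"
proof -
  have "monomials 0 j = {}"
    using assms by (auto simp: monomials_def mdeg_def)
  then have "vs.dim (hompart 0 j :: 'k mpoly set) = 0"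
    using vs.dim_le_card[OF hompart_subset_span_monomials finite_monomial_polys, of 0 j]
    by (simp add: monomial_polys_def)
  then show ?thesis
    unfolding hvec_def kdim_def by simp
qed

text \<open>Here \<open>k j\<close> stands for \<open>dim (0 :\<^sub>A L)\<^sub>j\<close>, which bounds \<open>h\<^sub>j - h\<^sub>j\<^sub>+\<^sub>1\<close> and equals it
  from the reduction number \<open>r\<close> on.\<close>

lemma hvec_tail_bounds:
  fixes h k :: "nat \<Rightarrow> int" and m :: int
  assumes m: "0 \<le> m"
    and le: "\<And>j. h j - h (Suc j) \<le> k j"
    and eq: "\<And>j. r \<le> j \<Longrightarrow> h j - h (Suc j) = k j"
    and bound: "\<And>j. j < s \<Longrightarrow> k j \<le> m * k (Suc j)"
    and d: "1 \<le> d" "r \<le> d" "h d < h (d - 1)"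
    and t: "d \<le> t" "t \<le> s"
  shows "h t < h (t - 1)" "h (t - 1) - h t \<le> m * (h t - h (t + 1))"
proof -
  have k_pos: "0 < k j" if "d - 1 \<le> j" "j \<le> s" for j
    using that
  proof (induction j rule: dec_induct)
    case base
    then show ?case
      using le[of "d - 1"] d by simp
  next
    case (step j)
    then have "0 < m * k (Suc j)"
      using bound[of j] by simp
    then show ?case
      using m by (simp add: zero_less_mult_iff)
  qed
  show "h t < h (t - 1)"
  proof (cases "t = d")
    case False
    then have "h (t - 1) - h t = k (t - 1)"
      using eq[of "t - 1"] t d by simp
    moreover have "0 < k (t - 1)"
      using t by (intro k_pos) auto
    ultimately show ?thesis
      by simp
  qed (use d in simp)
  have "h (t - 1) - h t \<le> k (t - 1)"
    using le[of "t - 1"] t d by simp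
  also have "\<dots> \<le> m * k t"
    using bound[of "t - 1"] t d by simp
  also have "k t = h t - h (t + 1)"
    using eq[of t] t d by simp
  finally show "h (t - 1) - h t \<le> m * (h t - h (t + 1))" .
qed

lemma (in graded_ideal) hvec_after_drop:
  assumes lev: "level n I" and top: "hvec n I s > 0" "hvec n I (Suc s) = 0"
    and L: "L = linform n c" "0 < n" "c 0 \<noteq> 0" and red: "R (Suc r) \<subseteq> ideal_plus_lin n I L"
    and d: "d \<noteq> 0" "r \<le> d" "hvec n I d < hvec n I (d - 1)"
    and t: "d \<le> t" "t \<le> s"
  shows "hvec n I t < hvec n I (t - 1)"
    "int (hvec n I (t - 1)) - int (hvec n I t) \<le> (int n - 1) * (int (hvec n I t) - int (hvec n I (t + 1)))"
proof -
  have L_hom: "L \<in> R 1"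
    using L(1) linform_mem_hompart by simp
  have eq: "int (hvec n I j) - int (hvec n I (Suc j)) = ann_dim L j" if "r \<le> j" for j
    using hvec_diff_eq_ann_dim[OF L_hom hompart_subset_ideal_plus_lin_deg[OF L_hom red that]] .
  have bound: "ann_dim L j \<le> (int n - 1) * ann_dim L (Suc j)" if "j < s" for j
    using ann_dim_le_ann_dim_Suc[OF L] level_socle_below_top[OF lev top] that by blast
  have "int (hvec n I d) < int (hvec n I (d - 1))"
    using d(3) by simp
  from hvec_tail_bounds[where h = "\<lambda>j. int (hvec n I j)" and k = "ann_dim L",
      OF _ hvec_diff_le_ann_dim[OF L_hom] eq bound _ d(2) this t] L(2) d(1)
  show "hvec n I t < hvec n I (t - 1)"
    "int (hvec n I (t - 1)) - int (hvec n I t) \<le> (int n - 1) * (int (hvec n I t) - int (hvec n I (t + 1)))"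
    by simp_all
qed

theorem proposition3p4:
  fixes n :: nat and I :: "'k::field_char_0 mpoly set" and s d :: nat
  assumes art: "graded_artinian n I"
    and lev: "level n I"
    and socdeg: "hvec n I s > 0" "\<forall>j>s. hvec n I j = 0"
    and dr: "d \<ge> r1 n I"
    and drop: "hvec n I (d - 1) > hvec n I d"
  shows "((\<forall>t. d \<le> t \<and> t \<le> s \<longrightarrow> hvec n I (t - 1) > hvec n I t) \<and> hvec n I s > 0) \<and>
         (\<forall>t. d \<le> t \<and> t \<le> s \<longrightarrow>
           int (hvec n I (t - 1)) - int (hvec n I t)
             \<le> (int n - 1) * (int (hvec n I t) - int (hvec n I (t + 1))))"
proof -
  interpret graded_ideal n I
    using art by (simp add: graded_artinian_def graded_ideal_def)
  have "d \<noteq> 0"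
    using drop by (cases d) auto
  show ?thesis
  proof (cases "n = 0")
    case True
    then have "s = 0"
      using socdeg(1) hvec_no_variables[of s I] by (cases "s = 0") auto
    then show ?thesis
      using \<open>d \<noteq> 0\<close> socdeg(1) by auto
  next
    case False
    obtain c where c: "red_num_wrt n I (linform n c) = r1 n I" "\<forall>i. c i \<noteq> 0"
      using r1_attained[OF art] by blast
    have "R (Suc (r1 n I)) \<subseteq> ideal_plus_lin n I (linform n c)"
      using hompart_subset_ideal_plus_lin_red_num ex_hompart_subset_ideal_plus_lin art c(1)
      unfolding graded_artinian_def by metis
    moreover have "hvec n I (Suc s) = 0" "0 < n" "c 0 \<noteq> 0"
      using socdeg(2) False c(2) by simp_all
    ultimately have "hvec n I t < hvec n I (t - 1) \<and> int (hvec n I (t - 1)) - int (hvec n I t)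
        \<le> (int n - 1) * (int (hvec n I t) - int (hvec n I (t + 1)))" if "d \<le> t" "t \<le> s" for t
      using hvec_after_drop[OF lev socdeg(1) _ refl _ _ _ \<open>d \<noteq> 0\<close> dr drop that] by blast
    then show ?thesis
      using socdeg(1) by blast
  qed
qed

end
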